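(* Let $\mathcal{Q}$ be either the category of unital involutive quantales with unital involutive homomorphisms or the category of strong involutive quantales with strong involutive homomorphisms. Let $\{L_i\}_i$ be a family of locales such that all but at most one of the $L_i$ are regular. Then the coproduct $\coprod_i L_i$ in $\mathcal{Q}$ is calculated in the category of locales, i.e. it is a locale (and hence coincides with the coproduct in the category of locales).
   Context: A quantale is a complete lattice with an associative multiplication distributing over arbitrary joins in both variables; $1$ is its top. It is unital if it has a multiplicative unit, strong if $1\cdot 1=1$. An involutive quantale has an involution $^*$ with $a^{**}=a$, $(a\cdot b)^*=b^*\cdot a^*$, $(\bigvee a_i)^*=\bigvee a_i^*$. Homomorphisms preserve joins and multiplication; unital ones preserve the unit, strong ones the top, involutive ones the involution. A locale is a complete lattice satisfying $a\wedge\bigvee_i b_i=\bigvee_i(a\wedge b_i)$, regarded as a unital involutive quantale with multiplication $\wedge$, unit the top, trivial involution; locale homomorphisms preserve joins, finite meets and top. A locale $L$ is regular if every $a\in L$ equals $\bigvee\{a'\in L: a'\prec a\}$, where $a'\prec a$ means there is $b\in L$ with $a'\wedge b=0$ and $a\vee b=1$. *)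

theory Defs
  imports Main
begin

record 'a qt =
  qcar :: "'a set"
  qle  :: "'a \<Rightarrow> 'a \<Rightarrow> bool"
  qmul :: "'a \<Rightarrow> 'a \<Rightarrow> 'a"
  qone :: 'a
  qinv :: "'a \<Rightarrow> 'a"

definition is_lub :: "'a qt \<Rightarrow> 'a set \<Rightarrow> 'a \<Rightarrow> bool" where
  "is_lub Q A s \<longleftrightarrow> s \<in> qcar Q \<and> (\<forall>a\<in>A. qle Q a s) \<and>
     (\<forall>u\<in>qcar Q. (\<forall>a\<in>A. qle Q a u) \<longrightarrow> qle Q s u)"

definition is_glb :: "'a qt \<Rightarrow> 'a set \<Rightarrow> 'a \<Rightarrow> bool" where
  "is_glb Q A s \<longleftrightarrow> s \<in> qcar Q \<and> (\<forall>a\<in>A. qle Q s a) \<and>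
     (\<forall>u\<in>qcar Q. (\<forall>a\<in>A. qle Q u a) \<longrightarrow> qle Q u s)"

definition qSup :: "'a qt \<Rightarrow> 'a set \<Rightarrow> 'a" where
  "qSup Q A = (THE s. is_lub Q A s)"

definition qInf :: "'a qt \<Rightarrow> 'a set \<Rightarrow> 'a" where
  "qInf Q A = (THE s. is_glb Q A s)"

definition qsup :: "'a qt \<Rightarrow> 'a \<Rightarrow> 'a \<Rightarrow> 'a" where
  "qsup Q a b = qSup Q {a, b}"

definition qinf :: "'a qt \<Rightarrow> 'a \<Rightarrow> 'a \<Rightarrow> 'a" where
  "qinf Q a b = qInf Q {a, b}"

definition qtop :: "'a qt \<Rightarrow> 'a" where
  "qtop Q = qSup Q (qcar Q)"

definition qbot :: "'a qt \<Rightarrow> 'a" where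
  "qbot Q = qSup Q {}"

definition complete_lattice_on :: "'a qt \<Rightarrow> bool" where
  "complete_lattice_on Q \<longleftrightarrow>
     (\<forall>a\<in>qcar Q. qle Q a a) \<and>
     (\<forall>a\<in>qcar Q. \<forall>b\<in>qcar Q. qle Q a b \<and> qle Q b a \<longrightarrow> a = b) \<and>
     (\<forall>a\<in>qcar Q. \<forall>b\<in>qcar Q. \<forall>c\<in>qcar Q. qle Q a b \<and> qle Q b c \<longrightarrow> qle Q a c) \<and>
     (\<forall>A. A \<subseteq> qcar Q \<longrightarrow> (\<exists>s. is_lub Q A s))"

definition quantale :: "'a qt \<Rightarrow> bool" where
  "quantale Q \<longleftrightarrow> complete_lattice_on Q \<and>
     (\<forall>a\<in>qcar Q. \<forall>b\<in>qcar Q. qmul Q a b \<in> qcar Q) \<and>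
     (\<forall>a\<in>qcar Q. \<forall>b\<in>qcar Q. \<forall>c\<in>qcar Q. qmul Q (qmul Q a b) c = qmul Q a (qmul Q b c)) \<and>
     (\<forall>a\<in>qcar Q. \<forall>A. A \<subseteq> qcar Q \<longrightarrow>
        qmul Q a (qSup Q A) = qSup Q ((\<lambda>b. qmul Q a b) ` A) \<and>
        qmul Q (qSup Q A) a = qSup Q ((\<lambda>b. qmul Q b a) ` A))"

definition involutive_quantale :: "'a qt \<Rightarrow> bool" where
  "involutive_quantale Q \<longleftrightarrow> quantale Q \<and>
     (\<forall>a\<in>qcar Q. qinv Q a \<in> qcar Q) \<and>
     (\<forall>a\<in>qcar Q. qinv Q (qinv Q a) = a) \<and>
     (\<forall>a\<in>qcar Q. \<forall>b\<in>qcar Q. qinv Q (qmul Q a b) = qmul Q (qinv Q b) (qinv Q a)) \<and>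
     (\<forall>A. A \<subseteq> qcar Q \<longrightarrow> qinv Q (qSup Q A) = qSup Q (qinv Q ` A))"

definition unital :: "'a qt \<Rightarrow> bool" where
  "unital Q \<longleftrightarrow> qone Q \<in> qcar Q \<and>
     (\<forall>a\<in>qcar Q. qmul Q (qone Q) a = a \<and> qmul Q a (qone Q) = a)"

definition strong :: "'a qt \<Rightarrow> bool" where
  "strong Q \<longleftrightarrow> qmul Q (qtop Q) (qtop Q) = qtop Q"

text \<open>The two categories of the statement.  In the strong category the
field qone is ignored.\<close>

datatype qcat = UnitalInv | StrongInv

definition qobj :: "qcat \<Rightarrow> 'a qt \<Rightarrow> bool" where
  "qobj K Q \<longleftrightarrow> involutive_quantale Q \<and>
     (case K of UnitalInv \<Rightarrow> unital Q | StrongInv \<Rightarrow> strong Q)"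

definition qhom :: "qcat \<Rightarrow> 'a qt \<Rightarrow> 'b qt \<Rightarrow> ('a \<Rightarrow> 'b) \<Rightarrow> bool" where
  "qhom K Q R h \<longleftrightarrow>
     (\<forall>a\<in>qcar Q. h a \<in> qcar R) \<and>
     (\<forall>A. A \<subseteq> qcar Q \<longrightarrow> h (qSup Q A) = qSup R (h ` A)) \<and>
     (\<forall>a\<in>qcar Q. \<forall>b\<in>qcar Q. h (qmul Q a b) = qmul R (h a) (h b)) \<and>
     (\<forall>a\<in>qcar Q. h (qinv Q a) = qinv R (h a)) \<and>
     (case K of UnitalInv \<Rightarrow> h (qone Q) = qone R | StrongInv \<Rightarrow> h (qtop Q) = qtop R)"

definition is_locale :: "qcat \<Rightarrow> 'a qt \<Rightarrow> bool" where
  "is_locale K L \<longleftrightarrow> complete_lattice_on L \<and>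
     (\<forall>a\<in>qcar L. \<forall>A. A \<subseteq> qcar L \<longrightarrow>
        qinf L a (qSup L A) = qSup L ((\<lambda>b. qinf L a b) ` A)) \<and>
     (\<forall>a\<in>qcar L. \<forall>b\<in>qcar L. qmul L a b = qinf L a b) \<and>
     (\<forall>a\<in>qcar L. qinv L a = a) \<and>
     (K = UnitalInv \<longrightarrow> qone L = qtop L)"

definition well_below :: "'a qt \<Rightarrow> 'a \<Rightarrow> 'a \<Rightarrow> bool" where
  "well_below L a' a \<longleftrightarrow>
     (\<exists>b\<in>qcar L. qinf L a' b = qbot L \<and> qsup L a b = qtop L)"

definition regular :: "'a qt \<Rightarrow> bool" where
  "regular L \<longleftrightarrow> (\<forall>a\<in>qcar L. a = qSup L {a'\<in>qcar L. well_below L a' a})"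

text \<open>(C, iota) is a coproduct in the category K of the family L indexed by I,
where the universal property is required against all test objects whose
carrier lies in the type 't (HOL cannot quantify over all types in a
formula).  Uniqueness of the mediating map is uniqueness on the carrier.\<close>

definition is_coproduct_wrt ::
  "qcat \<Rightarrow> 'i set \<Rightarrow> ('i \<Rightarrow> 'a qt) \<Rightarrow> 'c qt \<Rightarrow> ('i \<Rightarrow> 'a \<Rightarrow> 'c) \<Rightarrow> 't itself \<Rightarrow> bool" where
  "is_coproduct_wrt K I L C iota (_::'t itself) \<longleftrightarrow>
     qobj K C \<and> (\<forall>i\<in>I. qhom K (L i) C (iota i)) \<and>
     (\<forall>(Q::'t qt) (f::'i \<Rightarrow> 'a \<Rightarrow> 't). qobj K Q \<and> (\<forall>i\<in>I. qhom K (L i) Q (f i)) \<longrightarrow>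
        (\<exists>h. qhom K C Q h \<and> (\<forall>i\<in>I. \<forall>x\<in>qcar (L i). h (iota i x) = f i x) \<and>
           (\<forall>h'. qhom K C Q h' \<and> (\<forall>i\<in>I. \<forall>x\<in>qcar (L i). h' (iota i x) = f i x) \<longrightarrow>
              (\<forall>y\<in>qcar C. h' y = h y))))"

end

theory Submission
  imports Defs
begin

(* Write T for the unit of C (its top, in the strong case).  A locale homomorphism into C takes
   values in the self-adjoint idempotents z <= T for which T is a two-sided unit, and these values
   commute with each other.  If a' << a in a regular locale, witnessed by b with a' /\ b = 0 and
   a \/ b = 1, then a' z <= z a and z a' <= a z for every z <= T with T z = z T = z (reading
   a, a', b through the homomorphism); as a is the join of all a' << a, the image of a commutes
   with every such z, i.e. it is central.  So the products e h of central projections e with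
   h = T or h in the image of the one possibly non-regular locale form a commutative monoid of
   projections containing all generators, and the joins of its subsets form a subobject of C
   containing the images of the injections.  By the universal property of C against itself this
   subobject is all of C.  Hence every x in C is a join of projections below T, so x <= x x and T
   is a unit for C, which forces the multiplication to be the meet and T to be the top. *)

section \<open>Complete lattices and quantales on a carrier\<close>

lemma qle_refl: "complete_lattice_on Q \<Longrightarrow> a \<in> qcar Q \<Longrightarrow> qle Q a a"
  unfolding complete_lattice_on_def by blast

lemma qle_antisym:
  "complete_lattice_on Q \<Longrightarrow> a \<in> qcar Q \<Longrightarrow> b \<in> qcar Q \<Longrightarrow> qle Q a b \<Longrightarrow> qle Q b a \<Longrightarrow> a = b"
  unfolding complete_lattice_on_def by blast

lemma qle_trans:
  "complete_lattice_on Q \<Longrightarrow> a \<in> qcar Q \<Longrightarrow> b \<in> qcar Q \<Longrightarrow> c \<in> qcar Q \<Longrightarrow>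
   qle Q a b \<Longrightarrow> qle Q b c \<Longrightarrow> qle Q a c"
  unfolding complete_lattice_on_def by blast

lemma qSup_eqI: "complete_lattice_on Q \<Longrightarrow> is_lub Q A s \<Longrightarrow> qSup Q A = s"
  unfolding qSup_def by (rule the_equality) (auto simp: is_lub_def intro: qle_antisym)

lemma qInf_eqI: "complete_lattice_on Q \<Longrightarrow> is_glb Q A s \<Longrightarrow> qInf Q A = s"
  unfolding qInf_def by (rule the_equality) (auto simp: is_glb_def intro: qle_antisym)

lemma is_lub_qSup: "complete_lattice_on Q \<Longrightarrow> A \<subseteq> qcar Q \<Longrightarrow> is_lub Q A (qSup Q A)"
proof -
  assume "complete_lattice_on Q" "A \<subseteq> qcar Q"
  moreover from this obtain s where "is_lub Q A s" unfolding complete_lattice_on_def by blast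
  ultimately show ?thesis using qSup_eqI by metis
qed

lemma qSup_closed: "complete_lattice_on Q \<Longrightarrow> A \<subseteq> qcar Q \<Longrightarrow> qSup Q A \<in> qcar Q"
  using is_lub_qSup unfolding is_lub_def by blast

lemma qSup_upper: "complete_lattice_on Q \<Longrightarrow> A \<subseteq> qcar Q \<Longrightarrow> a \<in> A \<Longrightarrow> qle Q a (qSup Q A)"
  using is_lub_qSup unfolding is_lub_def by blast

lemma qSup_least:
  "complete_lattice_on Q \<Longrightarrow> A \<subseteq> qcar Q \<Longrightarrow> u \<in> qcar Q \<Longrightarrow> (\<And>a. a \<in> A \<Longrightarrow> qle Q a u) \<Longrightarrow>
   qle Q (qSup Q A) u"
  using is_lub_qSup unfolding is_lub_def by blast

lemma qSup_mono: "complete_lattice_on Q \<Longrightarrow> A \<subseteq> B \<Longrightarrow> B \<subseteq> qcar Q \<Longrightarrow> qle Q (qSup Q A) (qSup Q B)"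
  by (rule qSup_least) (auto intro: qSup_upper qSup_closed)

lemma qSup_absorb:
  "complete_lattice_on Q \<Longrightarrow> a \<in> qcar Q \<Longrightarrow> b \<in> qcar Q \<Longrightarrow> qle Q a b \<Longrightarrow> qSup Q {a, b} = b"
  by (rule qSup_eqI) (auto simp: is_lub_def intro: qle_refl)

lemma qSup_singleton: "complete_lattice_on Q \<Longrightarrow> a \<in> qcar Q \<Longrightarrow> qSup Q {a} = a"
  using qSup_absorb[of Q a a] qle_refl[of Q a] by simp

lemma qSup_Union:
  assumes cl: "complete_lattice_on Q" and sub: "\<And>A. A \<in> \<A> \<Longrightarrow> A \<subseteq> qcar Q"
  shows "qSup Q (qSup Q ` \<A>) = qSup Q (\<Union>\<A>)"
proof -
  have Sups: "qSup Q ` \<A> \<subseteq> qcar Q" and Union: "\<Union>\<A> \<subseteq> qcar Q"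
    using qSup_closed[OF cl] sub by auto
  have "qle Q (qSup Q (qSup Q ` \<A>)) (qSup Q (\<Union>\<A>))"
  proof (rule qSup_least[OF cl Sups qSup_closed[OF cl Union]])
    fix a assume "a \<in> qSup Q ` \<A>"
    then show "qle Q a (qSup Q (\<Union>\<A>))" using qSup_mono[OF cl _ Union] by blast
  qed
  moreover have "qle Q (qSup Q (\<Union>\<A>)) (qSup Q (qSup Q ` \<A>))"
  proof (rule qSup_least[OF cl Union qSup_closed[OF cl Sups]])
    fix a assume "a \<in> \<Union>\<A>"
    then obtain A where A: "A \<in> \<A>" "a \<in> A" by blast
    then have "qle Q a (qSup Q A)" using qSup_upper[OF cl sub] by blast
    moreover have "qle Q (qSup Q A) (qSup Q (qSup Q ` \<A>))" using qSup_upper[OF cl Sups] A by blast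
    ultimately show "qle Q a (qSup Q (qSup Q ` \<A>))"
      using qle_trans[OF cl] A sub qSup_closed[OF cl] Sups by blast
  qed
  ultimately show ?thesis using qle_antisym[OF cl] qSup_closed[OF cl] Sups Union by blast
qed

lemma qtop_closed: "complete_lattice_on Q \<Longrightarrow> qtop Q \<in> qcar Q"
  unfolding qtop_def by (rule qSup_closed) auto

lemma qle_qtop: "complete_lattice_on Q \<Longrightarrow> a \<in> qcar Q \<Longrightarrow> qle Q a (qtop Q)"
  unfolding qtop_def by (rule qSup_upper) auto

lemma qbot_closed: "complete_lattice_on Q \<Longrightarrow> qbot Q \<in> qcar Q"
  unfolding qbot_def by (rule qSup_closed) auto

lemma qbot_le: "complete_lattice_on Q \<Longrightarrow> a \<in> qcar Q \<Longrightarrow> qle Q (qbot Q) a"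
  unfolding qbot_def by (rule qSup_least) auto

lemma qinf_commute: "qinf Q a b = qinf Q b a"
  unfolding qinf_def by (simp add: insert_commute)

lemma is_glb_qInf:
  assumes cl: "complete_lattice_on Q" and A: "A \<subseteq> qcar Q"
  shows "is_glb Q A (qInf Q A)"
proof -
  have "is_glb Q A (qSup Q {u \<in> qcar Q. \<forall>a\<in>A. qle Q u a})"
    unfolding is_glb_def using A by (auto intro!: qSup_closed[OF cl] qSup_least[OF cl] qSup_upper[OF cl])
  then show ?thesis using qInf_eqI[OF cl] by simp
qed

lemma qinf_closed: "complete_lattice_on Q \<Longrightarrow> a \<in> qcar Q \<Longrightarrow> b \<in> qcar Q \<Longrightarrow> qinf Q a b \<in> qcar Q"
  unfolding qinf_def using is_glb_qInf[of Q "{a, b}"] unfolding is_glb_def by auto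

lemma qinf_absorb:
  "complete_lattice_on Q \<Longrightarrow> a \<in> qcar Q \<Longrightarrow> b \<in> qcar Q \<Longrightarrow> qle Q a b \<Longrightarrow> qinf Q a b = a"
  unfolding qinf_def by (rule qInf_eqI) (auto simp: is_glb_def intro: qle_refl)

lemma quantale_complete_lattice: "quantale Q \<Longrightarrow> complete_lattice_on Q"
  unfolding quantale_def by blast

lemma qmul_closed: "quantale Q \<Longrightarrow> a \<in> qcar Q \<Longrightarrow> b \<in> qcar Q \<Longrightarrow> qmul Q a b \<in> qcar Q"
  unfolding quantale_def by blast

lemma qmul_assoc:
  "quantale Q \<Longrightarrow> a \<in> qcar Q \<Longrightarrow> b \<in> qcar Q \<Longrightarrow> c \<in> qcar Q \<Longrightarrow>
   qmul Q (qmul Q a b) c = qmul Q a (qmul Q b c)"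
  unfolding quantale_def by blast

lemma qmul_Sup_right:
  "quantale Q \<Longrightarrow> a \<in> qcar Q \<Longrightarrow> A \<subseteq> qcar Q \<Longrightarrow> qmul Q a (qSup Q A) = qSup Q (qmul Q a ` A)"
  unfolding quantale_def by blast

lemma qmul_Sup_left:
  "quantale Q \<Longrightarrow> a \<in> qcar Q \<Longrightarrow> A \<subseteq> qcar Q \<Longrightarrow>
   qmul Q (qSup Q A) a = qSup Q ((\<lambda>b. qmul Q b a) ` A)"
  unfolding quantale_def by blast

lemma qmul_Sup_Sup:
  assumes Q: "quantale Q" and A: "A \<subseteq> qcar Q" and B: "B \<subseteq> qcar Q"
  shows "qmul Q (qSup Q A) (qSup Q B) = qSup Q {qmul Q a b | a b. a \<in> A \<and> b \<in> B}"
proof -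
  have cl: "complete_lattice_on Q" using Q by (rule quantale_complete_lattice)
  let ?\<A> = "(\<lambda>b. (\<lambda>a. qmul Q a b) ` A) ` B"
  have "qmul Q (qSup Q A) (qSup Q B) = qSup Q (qmul Q (qSup Q A) ` B)"
    using qmul_Sup_right[OF Q qSup_closed[OF cl A] B] .
  also have "qmul Q (qSup Q A) ` B = qSup Q ` ?\<A>"
    unfolding image_image by (rule image_cong) (use qmul_Sup_left[OF Q _ A] B in auto)
  also have "qSup Q (qSup Q ` ?\<A>) = qSup Q (\<Union>?\<A>)"
    using qmul_closed[OF Q] A B by (intro qSup_Union[OF cl]) auto
  also have "\<Union>?\<A> = {qmul Q a b | a b. a \<in> A \<and> b \<in> B}"
    by blast
  finally show ?thesis .
qed

lemma qmul_mono:
  assumes Q: "quantale Q" and in_car: "a \<in> qcar Q" "a' \<in> qcar Q" "b \<in> qcar Q" "b' \<in> qcar Q"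
    and le: "qle Q a a'" "qle Q b b'"
  shows "qle Q (qmul Q a b) (qmul Q a' b')"
proof -
  have cl: "complete_lattice_on Q" using Q by (rule quantale_complete_lattice)
  have "qmul Q a' b' = qmul Q (qSup Q {a, a'}) (qSup Q {b, b'})"
    using qSup_absorb[OF cl] in_car le by simp
  also have "\<dots> = qSup Q {qmul Q x y | x y. x \<in> {a, a'} \<and> y \<in> {b, b'}}"
    using in_car by (intro qmul_Sup_Sup[OF Q]) auto
  finally show ?thesis
    using qmul_closed[OF Q] in_car by (auto intro!: qSup_upper[OF cl])
qed

lemma qmul_commute_middle:
  assumes Q: "quantale Q" and in_car: "a \<in> qcar Q" "b \<in> qcar Q" "c \<in> qcar Q" "d \<in> qcar Q"
    and bc: "qmul Q b c = qmul Q c b"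
  shows "qmul Q (qmul Q a b) (qmul Q c d) = qmul Q (qmul Q a c) (qmul Q b d)"
proof -
  have "qmul Q (qmul Q a b) (qmul Q c d) = qmul Q a (qmul Q (qmul Q b c) d)"
    using in_car by (simp add: qmul_assoc[OF Q] qmul_closed[OF Q])
  also have "\<dots> = qmul Q (qmul Q a c) (qmul Q b d)"
    using in_car by (simp add: bc qmul_assoc[OF Q] qmul_closed[OF Q])
  finally show ?thesis .
qed

lemma involutive_quantale_quantale: "involutive_quantale Q \<Longrightarrow> quantale Q"
  unfolding involutive_quantale_def by blast

lemma qinv_closed: "involutive_quantale Q \<Longrightarrow> a \<in> qcar Q \<Longrightarrow> qinv Q a \<in> qcar Q"
  unfolding involutive_quantale_def by blast

lemma qinv_qinv: "involutive_quantale Q \<Longrightarrow> a \<in> qcar Q \<Longrightarrow> qinv Q (qinv Q a) = a"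
  unfolding involutive_quantale_def by blast

lemma qinv_qmul:
  "involutive_quantale Q \<Longrightarrow> a \<in> qcar Q \<Longrightarrow> b \<in> qcar Q \<Longrightarrow>
   qinv Q (qmul Q a b) = qmul Q (qinv Q b) (qinv Q a)"
  unfolding involutive_quantale_def by blast

lemma qinv_Sup: "involutive_quantale Q \<Longrightarrow> A \<subseteq> qcar Q \<Longrightarrow> qinv Q (qSup Q A) = qSup Q (qinv Q ` A)"
  unfolding involutive_quantale_def by blast

lemma qhom_mono:
  assumes Q: "complete_lattice_on Q" and R: "complete_lattice_on R" and h: "qhom K Q R h"
    and a: "a \<in> qcar Q" and b: "b \<in> qcar Q" and ab: "qle Q a b"
  shows "qle R (h a) (h b)"
proof -
  have in_car: "h a \<in> qcar R" "h b \<in> qcar R" using h a b unfolding qhom_def by auto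
  have "h b = h (qSup Q {a, b})" using qSup_absorb[OF Q a b ab] by simp
  also have "\<dots> = qSup R {h a, h b}" using h a b unfolding qhom_def by auto
  finally show ?thesis using qSup_upper[OF R, of "{h a, h b}" "h a"] in_car by simp
qed

definition qop :: "'a qt \<Rightarrow> 'a qt" where
  "qop Q = Q\<lparr>qmul := \<lambda>a b. qmul Q b a\<rparr>"

lemma qop_simps [simp]:
  "qcar (qop Q) = qcar Q" "qle (qop Q) = qle Q" "qmul (qop Q) a b = qmul Q b a"
  by (simp_all add: qop_def)

lemma qSup_qop [simp]: "qSup (qop Q) = qSup Q"
  by (simp add: qSup_def is_lub_def fun_eq_iff)

lemma complete_lattice_on_qop [simp]: "complete_lattice_on (qop Q) = complete_lattice_on Q"
  by (simp add: complete_lattice_on_def is_lub_def)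

lemma qbot_qop [simp]: "qbot (qop Q) = qbot Q"
  by (simp add: qbot_def)

lemma quantale_qop:
  assumes Q: "quantale Q" shows "quantale (qop Q)"
  unfolding quantale_def
proof (intro conjI ballI allI impI)
  show "complete_lattice_on (qop Q)" using quantale_complete_lattice[OF Q] by simp
  fix a b c A assume a: "a \<in> qcar (qop Q)" and b: "b \<in> qcar (qop Q)" and c: "c \<in> qcar (qop Q)"
  show "qmul (qop Q) a b \<in> qcar (qop Q)" using qmul_closed[OF Q] a b by simp
  show "qmul (qop Q) (qmul (qop Q) a b) c = qmul (qop Q) a (qmul (qop Q) b c)"
    using qmul_assoc[OF Q, of c b a] a b c by simp
  assume A: "A \<subseteq> qcar (qop Q)"
  show "qmul (qop Q) a (qSup (qop Q) A) = qSup (qop Q) (qmul (qop Q) a ` A)"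
    using qmul_Sup_left[OF Q] a A by simp
  show "qmul (qop Q) (qSup (qop Q) A) a = qSup (qop Q) ((\<lambda>b. qmul (qop Q) b a) ` A)"
    using qmul_Sup_right[OF Q] a A by simp
qed

section \<open>Projections below the unit\<close>

definition kunit :: "qcat \<Rightarrow> 'a qt \<Rightarrow> 'a" where
  "kunit K Q = (case K of UnitalInv \<Rightarrow> qone Q | StrongInv \<Rightarrow> qtop Q)"

definition below_unit :: "'a qt \<Rightarrow> 'a \<Rightarrow> 'a set" where
  "below_unit Q T = {z \<in> qcar Q. qle Q z T \<and> qmul Q z T = z \<and> qmul Q T z = z}"

lemma below_unit_qop [simp]: "below_unit (qop Q) T = below_unit Q T"
  unfolding below_unit_def by auto

lemma below_unit_mul_closed:
  assumes Q: "quantale Q" and T: "T \<in> qcar Q" and z: "z \<in> below_unit Q T" and w: "w \<in> below_unit Q T"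
  shows "qmul Q z w \<in> below_unit Q T"
proof -
  have cl: "complete_lattice_on Q" using Q by (rule quantale_complete_lattice)
  have zw: "z \<in> qcar Q" "w \<in> qcar Q" "qmul Q z w \<in> qcar Q"
    using z w qmul_closed[OF Q] unfolding below_unit_def by auto
  have "qle Q (qmul Q z w) (qmul Q z T)"
    using qmul_mono[OF Q] qle_refl[OF cl] zw T w unfolding below_unit_def by auto
  then have "qle Q (qmul Q z w) T"
    using z qle_trans[OF cl zw(3) zw(1) T] unfolding below_unit_def by auto
  moreover have "qmul Q (qmul Q z w) T = qmul Q z w" "qmul Q T (qmul Q z w) = qmul Q z w"
    using z w qmul_assoc[OF Q zw(1) zw(2) T] qmul_assoc[OF Q T zw(1) zw(2)] unfolding below_unit_def by auto
  ultimately show ?thesis using zw unfolding below_unit_def by auto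
qed

(* u' z = u' z (u \/ v) = u' z u \/ u' z v, where u' z u <= T z u = z u and u' z v <= u' T v = u' v = 0. *)
lemma complemented_mul_le_swap:
  assumes Q: "quantale Q"
    and z: "z \<in> below_unit Q T" and v: "v \<in> below_unit Q T"
    and u: "u \<in> qcar Q" and u': "u' \<in> qcar Q" "qle Q u' T"
    and join: "qSup Q {u, v} = T" and disjoint: "qmul Q u' v = qbot Q"
  shows "qle Q (qmul Q u' z) (qmul Q z u)"
proof -
  have cl: "complete_lattice_on Q" using Q by (rule quantale_complete_lattice)
  have T: "T \<in> qcar Q" using join qSup_closed[OF cl] u v unfolding below_unit_def by force
  have zc: "z \<in> qcar Q" "qle Q z T" "qmul Q z T = z" "qmul Q T z = z"
    and vc: "v \<in> qcar Q" "qmul Q T v = v"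
    using z v unfolding below_unit_def by auto
  have zu: "qmul Q z u \<in> qcar Q" and zv: "qmul Q z v \<in> qcar Q"
    using qmul_closed[OF Q] zc vc u by auto
  have "qle Q (qmul Q u' (qmul Q z u)) (qmul Q T (qmul Q z u))"
    using qmul_mono[OF Q u'(1) T zu zu u'(2) qle_refl[OF cl zu]] .
  then have left: "qle Q (qmul Q u' (qmul Q z u)) (qmul Q z u)"
    using qmul_assoc[OF Q T zc(1) u] zc by simp
  have "qle Q (qmul Q u' (qmul Q z v)) (qmul Q u' (qmul Q T v))"
    using qmul_mono[OF Q u'(1) u'(1) zv qmul_closed[OF Q T vc(1)] qle_refl[OF cl u'(1)]]
      qmul_mono[OF Q zc(1) T vc(1) vc(1) zc(2) qle_refl[OF cl vc(1)]] by blast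
  then have "qle Q (qmul Q u' (qmul Q z v)) (qbot Q)" using vc disjoint by simp
  then have right: "qle Q (qmul Q u' (qmul Q z v)) (qmul Q z u)"
    using qle_trans[OF cl _ qbot_closed[OF cl] zu] qbot_le[OF cl zu] qmul_closed[OF Q u'(1) zv] by blast
  have "qmul Q u' z = qmul Q u' (qmul Q z (qSup Q {u, v}))" using join zc by simp
  also have "\<dots> = qSup Q {qmul Q u' (qmul Q z u), qmul Q u' (qmul Q z v)}"
    using qmul_Sup_right[OF Q zc(1), of "{u, v}"] qmul_Sup_right[OF Q u'(1), of "{qmul Q z u, qmul Q z v}"]
      u vc zu zv by simp
  also have "qle Q \<dots> (qmul Q z u)"
    using left right qmul_closed[OF Q] u'(1) zu zv by (intro qSup_least[OF cl _ zu]) auto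
  finally show ?thesis .
qed

definition projection :: "'a qt \<Rightarrow> 'a \<Rightarrow> bool" where
  "projection Q e \<longleftrightarrow> e \<in> qcar Q \<and> qmul Q e e = e \<and> qinv Q e = e"

definition central_projections :: "'a qt \<Rightarrow> 'a \<Rightarrow> 'a set" where
  "central_projections Q T =
     {e \<in> below_unit Q T. projection Q e \<and> (\<forall>z\<in>below_unit Q T. qmul Q e z = qmul Q z e)}"

definition commuting_projections :: "'a qt \<Rightarrow> 'a \<Rightarrow> 'a set \<Rightarrow> bool" where
  "commuting_projections Q T H \<longleftrightarrow> H \<subseteq> below_unit Q T \<and> (\<forall>h\<in>H. projection Q h) \<and>
     (\<forall>h\<in>H. \<forall>h'\<in>H. qmul Q h h' \<in> H \<and> qmul Q h h' = qmul Q h' h)"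

lemma kunit_closed: "qobj K Q \<Longrightarrow> kunit K Q \<in> qcar Q"
  unfolding qobj_def involutive_quantale_def kunit_def unital_def
  by (cases K) (auto intro: qtop_closed quantale_complete_lattice)

lemma qinv_kunit:
  assumes Q: "qobj K Q" shows "qinv Q (kunit K Q) = kunit K Q"
proof (cases K)
  case UnitalInv
  then have iq: "involutive_quantale Q" and un: "unital Q" using Q unfolding qobj_def by auto
  let ?e = "qone Q"
  have e: "?e \<in> qcar Q" and ie: "qinv Q ?e \<in> qcar Q" using un qinv_closed[OF iq] unfolding unital_def by auto
  have "?e = qinv Q (qinv Q ?e)" using qinv_qinv[OF iq e] by simp
  also have "\<dots> = qinv Q (qmul Q (qinv Q ?e) ?e)" using un ie unfolding unital_def by auto
  also have "\<dots> = qmul Q (qinv Q ?e) ?e" using qinv_qmul[OF iq ie e] qinv_qinv[OF iq e] by simp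
  also have "\<dots> = qinv Q ?e" using un ie unfolding unital_def by auto
  finally show ?thesis using UnitalInv unfolding kunit_def by simp
next
  case StrongInv
  have iq: "involutive_quantale Q" using Q unfolding qobj_def by auto
  have "qinv Q ` qcar Q = qcar Q"
    using qinv_closed[OF iq] qinv_qinv[OF iq] by (force simp: image_iff)
  then show ?thesis using StrongInv qinv_Sup[OF iq, of "qcar Q"] unfolding kunit_def qtop_def by simp
qed

lemma kunit_central: assumes Q: "qobj K Q" shows "kunit K Q \<in> central_projections Q (kunit K Q)"
proof -
  have cl: "complete_lattice_on Q"
    using Q unfolding qobj_def involutive_quantale_def quantale_def by blast
  have "qmul Q (kunit K Q) (kunit K Q) = kunit K Q"
    using Q kunit_closed[OF Q] unfolding qobj_def kunit_def unital_def strong_def by (cases K) auto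
  then show ?thesis
    using kunit_closed[OF Q] qinv_kunit[OF Q] qle_refl[OF cl]
    unfolding central_projections_def below_unit_def projection_def by auto
qed

lemma commuting_projections_central:
  assumes Q: "involutive_quantale Q" and T: "T \<in> qcar Q"
  shows "commuting_projections Q T (central_projections Q T)"
  unfolding commuting_projections_def
proof (intro conjI ballI)
  have QQ: "quantale Q" using Q by (rule involutive_quantale_quantale)
  show "central_projections Q T \<subseteq> below_unit Q T" "\<And>e. e \<in> central_projections Q T \<Longrightarrow> projection Q e"
    unfolding central_projections_def by auto
  fix e e' assume e: "e \<in> central_projections Q T" and e': "e' \<in> central_projections Q T"
  have ec: "e \<in> qcar Q" "e' \<in> qcar Q" "e \<in> below_unit Q T" "e' \<in> below_unit Q T"
    using e e' unfolding central_projections_def below_unit_def by auto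
  have pe: "qmul Q e e = e" "qinv Q e = e" "qmul Q e' e' = e'" "qinv Q e' = e'"
    using e e' unfolding central_projections_def projection_def by auto
  have ze: "qmul Q e z = qmul Q z e" "qmul Q e' z = qmul Q z e'" if "z \<in> below_unit Q T" for z
    using e e' that unfolding central_projections_def by auto
  have comm: "qmul Q e e' = qmul Q e' e" using ze(1)[OF ec(4)] .
  have "qmul Q e e' \<in> below_unit Q T" using below_unit_mul_closed[OF QQ T ec(3,4)] .
  moreover have "projection Q (qmul Q e e')"
  proof -
    have "qmul Q (qmul Q e e') (qmul Q e e') = qmul Q (qmul Q e e) (qmul Q e' e')"
      by (rule qmul_commute_middle[OF QQ ec(1,2,1,2) comm[symmetric]])
    then have "qmul Q (qmul Q e e') (qmul Q e e') = qmul Q e e'" using pe(1,3) by simp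
    moreover have "qinv Q (qmul Q e e') = qmul Q e' e" using qinv_qmul[OF Q ec(1,2)] pe(2,4) by simp
    ultimately show ?thesis using comm qmul_closed[OF QQ ec(1,2)] unfolding projection_def by simp
  qed
  moreover have "qmul Q (qmul Q e e') z = qmul Q z (qmul Q e e')" if z: "z \<in> below_unit Q T" for z
  proof -
    have zc: "z \<in> qcar Q" using z unfolding below_unit_def by auto
    have "qmul Q (qmul Q e e') z = qmul Q e (qmul Q z e')"
      using qmul_assoc[OF QQ ec(1,2) zc] ze(2)[OF z] by simp
    also have "\<dots> = qmul Q (qmul Q z e) e'" using qmul_assoc[OF QQ ec(1) zc ec(2)] ze(1)[OF z] by simp
    also have "\<dots> = qmul Q z (qmul Q e e')" using qmul_assoc[OF QQ zc ec(1,2)] .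
    finally show ?thesis .
  qed
  ultimately show "qmul Q e e' \<in> central_projections Q T" unfolding central_projections_def by blast
  show "qmul Q e e' = qmul Q e' e" by (rule comm)
qed

lemma commuting_projections_insert_unit:
  assumes T: "T \<in> central_projections Q T" and H: "commuting_projections Q T H"
  shows "commuting_projections Q T (insert T H)"
  unfolding commuting_projections_def
proof (intro conjI ballI)
  have Tb: "T \<in> below_unit Q T" and Tp: "projection Q T"
    using T unfolding central_projections_def by auto
  have Hb: "H \<subseteq> below_unit Q T" and Hp: "\<forall>h\<in>H. projection Q h"
    and Hm: "\<forall>h\<in>H. \<forall>h'\<in>H. qmul Q h h' \<in> H \<and> qmul Q h h' = qmul Q h' h"
    using H unfolding commuting_projections_def by blast+
  show "insert T H \<subseteq> below_unit Q T" using Tb Hb by blast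
  show "projection Q h" if "h \<in> insert T H" for h using that Tp Hp by blast
  have unit: "qmul Q T x = x" "qmul Q x T = x" if "x \<in> insert T H" for x
    using that Tb Hb unfolding below_unit_def by auto
  fix h h' assume h: "h \<in> insert T H" and h': "h' \<in> insert T H"
  have "qmul Q h h' \<in> insert T H \<and> qmul Q h h' = qmul Q h' h"
  proof (cases "h = T \<or> h' = T")
    case True
    then show ?thesis using unit[OF h] unit[OF h'] h h' by auto
  next
    case False
    then have "h \<in> H" "h' \<in> H" using h h' by auto
    then show ?thesis using Hm by blast
  qed
  then show "qmul Q h h' \<in> insert T H" "qmul Q h h' = qmul Q h' h" by blast+
qed

lemma commuting_projections_products:
  assumes Q: "involutive_quantale Q" and T: "T \<in> qcar Q" and H: "commuting_projections Q T H"
  shows "commuting_projections Q T {qmul Q e h | e h. e \<in> central_projections Q T \<and> h \<in> H}"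
    (is "commuting_projections Q T ?M")
proof -
  have QQ: "quantale Q" using Q by (rule involutive_quantale_quantale)
  let ?E = "central_projections Q T"
  have E: "commuting_projections Q T ?E" using commuting_projections_central[OF Q T] .
  have Hb: "H \<subseteq> below_unit Q T" and Hp: "\<forall>h\<in>H. projection Q h"
    and Hm: "\<forall>h\<in>H. \<forall>h'\<in>H. qmul Q h h' \<in> H \<and> qmul Q h h' = qmul Q h' h"
    using H unfolding commuting_projections_def by blast+
  have Eb: "?E \<subseteq> below_unit Q T" and Ep: "\<forall>e\<in>?E. projection Q e"
    and Em: "\<forall>e\<in>?E. \<forall>e'\<in>?E. qmul Q e e' \<in> ?E"
    using E unfolding commuting_projections_def by blast+
  have car: "x \<in> qcar Q" if "x \<in> ?E \<union> H" for x
    using that Eb Hb unfolding below_unit_def by blast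
  have swap: "qmul Q h e = qmul Q e h" if "e \<in> ?E" "h \<in> H" for e h
    using that Hb unfolding central_projections_def by auto
  have mult: "qmul Q (qmul Q e h) (qmul Q e' h') = qmul Q (qmul Q e e') (qmul Q h h')"
    if e: "e \<in> ?E" "e' \<in> ?E" and h: "h \<in> H" "h' \<in> H" for e h e' h'
    using qmul_commute_middle[OF QQ car car car car, of e h e' h'] swap[OF e(2) h(1)] e h by blast
  show ?thesis
    unfolding commuting_projections_def
  proof (intro conjI ballI)
    show "?M \<subseteq> below_unit Q T" using below_unit_mul_closed[OF QQ T] Eb Hb by blast
    fix x assume "x \<in> ?M"
    then obtain e h where e: "e \<in> ?E" and h: "h \<in> H" and x: "x = qmul Q e h" by blast
    have pe: "qmul Q e e = e" "qinv Q e = e" and ph: "qmul Q h h = h" "qinv Q h = h"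
      using Ep Hp e h unfolding projection_def by auto
    have "qmul Q x x = x" using mult[OF e e h h] pe ph x by simp
    moreover have "qinv Q x = x" using qinv_qmul[OF Q car car, of e h] pe ph swap[OF e h] e h x by simp
    ultimately show "projection Q x" using qmul_closed[OF QQ car car, of e h] e h x
      unfolding projection_def by simp
    fix y assume "y \<in> ?M"
    then obtain e' h' where e': "e' \<in> ?E" and h': "h' \<in> H" and y: "y = qmul Q e' h'" by blast
    have "qmul Q e e' \<in> ?E" "qmul Q h h' \<in> H" using Em Hm e e' h h' by blast+
    moreover have "qmul Q e e' = qmul Q e' e" using E e e' unfolding commuting_projections_def by blast
    moreover have "qmul Q h h' = qmul Q h' h" using Hm h h' by blast
    ultimately show "qmul Q x y \<in> ?M" "qmul Q x y = qmul Q y x"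
      using mult[OF e e' h h'] mult[OF e' e h' h] x y by auto
  qed
qed

lemma is_locale_of_square_increasing:
  assumes Q: "qobj K Q" and below: "qcar Q \<subseteq> below_unit Q (kunit K Q)"
    and square: "\<And>x. x \<in> qcar Q \<Longrightarrow> qle Q x (qmul Q x x)"
    and inv: "\<And>x. x \<in> qcar Q \<Longrightarrow> qinv Q x = x"
  shows "is_locale K Q"
proof -
  have QQ: "quantale Q" using Q unfolding qobj_def involutive_quantale_def by blast
  have cl: "complete_lattice_on Q" using QQ by (rule quantale_complete_lattice)
  define T where "T = kunit K Q"
  have T: "T \<in> qcar Q" using kunit_closed[OF Q] unfolding T_def .
  have unit: "qle Q x T" "qmul Q x T = x" "qmul Q T x = x" if "x \<in> qcar Q" for x
    using below that unfolding below_unit_def T_def by auto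
  have meet: "qmul Q a b = qinf Q a b" if a: "a \<in> qcar Q" and b: "b \<in> qcar Q" for a b
    unfolding qinf_def
  proof (rule qInf_eqI[OF cl, symmetric])
    have ab: "qmul Q a b \<in> qcar Q" using qmul_closed[OF QQ a b] .
    have "qle Q (qmul Q a b) a" using qmul_mono[OF QQ a a b T qle_refl[OF cl a] unit(1)[OF b]] unit(2)[OF a] by simp
    moreover have "qle Q (qmul Q a b) b" using qmul_mono[OF QQ a T b b unit(1)[OF a] qle_refl[OF cl b]] unit(3)[OF b] by simp
    moreover have "qle Q u (qmul Q a b)" if u: "u \<in> qcar Q" "qle Q u a" "qle Q u b" for u
      using qle_trans[OF cl u(1) qmul_closed[OF QQ u(1) u(1)] ab] square[OF u(1)] qmul_mono[OF QQ u(1) a u(1) b u(2,3)]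
      by blast
    ultimately show "is_glb Q {a, b} (qmul Q a b)" unfolding is_glb_def using ab by blast
  qed
  show ?thesis
    unfolding is_locale_def
  proof (intro conjI ballI allI impI)
    show "complete_lattice_on Q" by (rule cl)
    show "qmul Q a b = qinf Q a b" if "a \<in> qcar Q" "b \<in> qcar Q" for a b using meet that .
    show "qinv Q a = a" if "a \<in> qcar Q" for a using inv that .
    show "qinf Q a (qSup Q A) = qSup Q (qinf Q a ` A)" if a: "a \<in> qcar Q" and A: "A \<subseteq> qcar Q" for a A
    proof -
      have "qinf Q a ` A = qmul Q a ` A" using meet a A by (auto simp: image_iff subset_iff)
      then show ?thesis using meet[OF a qSup_closed[OF cl A]] qmul_Sup_right[OF QQ a A] by simp
    qed
    show "qone Q = qtop Q" if "K = UnitalInv"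
      using that unit(1)[OF qtop_closed[OF cl]] qle_qtop[OF cl T] qle_antisym[OF cl T qtop_closed[OF cl]]
      unfolding T_def kunit_def by simp
  qed
qed

section \<open>Homomorphisms out of locales\<close>

lemma locale_complete_lattice: "is_locale K L \<Longrightarrow> complete_lattice_on L"
  unfolding is_locale_def by blast

lemma locale_hom_qmul:
  "is_locale K L \<Longrightarrow> qhom K L Q f \<Longrightarrow> a \<in> qcar L \<Longrightarrow> b \<in> qcar L \<Longrightarrow>
   qmul Q (f a) (f b) = f (qinf L a b)"
  unfolding is_locale_def qhom_def by metis

lemma locale_hom_qtop: "is_locale K L \<Longrightarrow> qhom K L Q f \<Longrightarrow> f (qtop L) = kunit K Q"
  unfolding is_locale_def qhom_def kunit_def by (cases K) auto

lemma locale_hom_below_unit: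
  assumes L: "is_locale K L" and Q: "complete_lattice_on Q" and f: "qhom K L Q f" and a: "a \<in> qcar L"
  shows "f a \<in> below_unit Q (kunit K Q)"
proof -
  have cl: "complete_lattice_on L" using L by (rule locale_complete_lattice)
  have top: "qtop L \<in> qcar L" and a_top: "qle L a (qtop L)" using qtop_closed[OF cl] qle_qtop[OF cl a] .
  have "qle Q (f a) (kunit K Q)"
    using qhom_mono[OF cl Q f a top a_top] locale_hom_qtop[OF L f] by simp
  moreover have "qmul Q (f a) (kunit K Q) = f a" "qmul Q (kunit K Q) (f a) = f a"
    using locale_hom_qmul[OF L f] locale_hom_qtop[OF L f] qinf_absorb[OF cl a top a_top] qinf_commute
    by (metis a top)+
  ultimately show ?thesis using f a unfolding below_unit_def qhom_def by auto
qed

lemma locale_hom_projection: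
  assumes L: "is_locale K L" and f: "qhom K L Q f" and a: "a \<in> qcar L"
  shows "projection Q (f a)"
proof -
  have cl: "complete_lattice_on L" using L by (rule locale_complete_lattice)
  have "qmul Q (f a) (f a) = f a" using locale_hom_qmul[OF L f a a] qinf_absorb[OF cl a a qle_refl[OF cl a]] by simp
  moreover have "qinv Q (f a) = f a" using L f a unfolding is_locale_def qhom_def by metis
  ultimately show ?thesis using f a unfolding projection_def qhom_def by auto
qed

lemma commuting_projections_locale_hom_image:
  assumes L: "is_locale K L" and Q: "complete_lattice_on Q" and f: "qhom K L Q f"
  shows "commuting_projections Q (kunit K Q) (f ` qcar L)"
  unfolding commuting_projections_def
proof (intro conjI ballI)
  show "f ` qcar L \<subseteq> below_unit Q (kunit K Q)" using locale_hom_below_unit[OF L Q f] by blast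
  show "projection Q h" if "h \<in> f ` qcar L" for h using locale_hom_projection[OF L f] that by blast
  fix h h' assume "h \<in> f ` qcar L" "h' \<in> f ` qcar L"
  then obtain a b where a: "a \<in> qcar L" and b: "b \<in> qcar L" and h: "h = f a" "h' = f b" by blast
  have "qinf L a b \<in> qcar L" using qinf_closed[OF locale_complete_lattice[OF L] a b] .
  then show "qmul Q h h' \<in> f ` qcar L" "qmul Q h h' = qmul Q h' h"
    using locale_hom_qmul[OF L f a b] locale_hom_qmul[OF L f b a] qinf_commute[of L a b] h by auto
qed

lemma well_below_hom_mul_le_swap:
  assumes L: "is_locale K L" and Q: "qobj K Q" and f: "qhom K L Q f"
    and a: "a \<in> qcar L" and a': "a' \<in> qcar L" "well_below L a' a"
    and z: "z \<in> below_unit Q (kunit K Q)"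
  shows "qle Q (qmul Q (f a') z) (qmul Q z (f a))" "qle Q (qmul Q z (f a')) (qmul Q (f a) z)"
proof -
  have QQ: "quantale Q" using Q unfolding qobj_def involutive_quantale_def by blast
  have cl: "complete_lattice_on Q" using QQ by (rule quantale_complete_lattice)
  define T where "T = kunit K Q"
  obtain b where b: "b \<in> qcar L" and disj: "qinf L a' b = qbot L" and cover: "qsup L a b = qtop L"
    using a' unfolding well_below_def by blast
  have fa: "f a \<in> below_unit Q T" and fa': "f a' \<in> below_unit Q T" and fb: "f b \<in> below_unit Q T"
    using locale_hom_below_unit[OF L cl f] a a' b unfolding T_def by auto
  have "f (qbot L) = qbot Q" using f unfolding qhom_def qbot_def by auto
  then have disj': "qmul Q (f a') (f b) = qbot Q" "qmul Q (f b) (f a') = qbot Q"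
    using locale_hom_qmul[OF L f a'(1) b] locale_hom_qmul[OF L f b a'(1)] disj qinf_commute[of L b a']
    by simp_all
  have "f (qSup L {a, b}) = qSup Q {f a, f b}" using f a b unfolding qhom_def by auto
  then have join: "qSup Q {f a, f b} = T" using cover locale_hom_qtop[OF L f] unfolding qsup_def T_def by simp
  have in_car: "f a \<in> qcar Q" "f a' \<in> qcar Q" and le: "qle Q (f a') T"
    using fa fa' unfolding below_unit_def by auto
  show "qle Q (qmul Q (f a') z) (qmul Q z (f a))"
    using complemented_mul_le_swap[OF QQ _ fb in_car le join disj'(1)] z unfolding T_def .
  show "qle Q (qmul Q z (f a')) (qmul Q (f a) z)"
    using complemented_mul_le_swap[OF quantale_qop[OF QQ], of z T "f b" "f a" "f a'"]
      z fb in_car le join disj'(2) unfolding T_def by simp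
qed

lemma regular_locale_hom_central:
  assumes L: "is_locale K L" and reg: "regular L" and Q: "qobj K Q" and f: "qhom K L Q f"
    and a: "a \<in> qcar L"
  shows "f a \<in> central_projections Q (kunit K Q)"
proof -
  have QQ: "quantale Q" using Q unfolding qobj_def involutive_quantale_def by blast
  have cl: "complete_lattice_on Q" using QQ by (rule quantale_complete_lattice)
  define W where "W = {a' \<in> qcar L. well_below L a' a}"
  have W: "W \<subseteq> qcar L" and fW: "f ` W \<subseteq> qcar Q" using f unfolding W_def qhom_def by auto
  have "a = qSup L W" using reg a unfolding regular_def W_def by blast
  then have fa: "f a = qSup Q (f ` W)" using f W unfolding qhom_def by auto
  have fa_below: "f a \<in> below_unit Q (kunit K Q)" using locale_hom_below_unit[OF L cl f a] .
  note swap = well_below_hom_mul_le_swap[OF L Q f a]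
  have "qmul Q (f a) z = qmul Q z (f a)" if z: "z \<in> below_unit Q (kunit K Q)" for z
  proof -
    have zc: "z \<in> qcar Q" using z unfolding below_unit_def by auto
    have both: "qmul Q (f a) z \<in> qcar Q" "qmul Q z (f a) \<in> qcar Q"
      using qmul_closed[OF QQ] zc fa_below unfolding below_unit_def by auto
    have "qmul Q (f a) z = qSup Q ((\<lambda>x. qmul Q x z) ` f ` W)"
      using qmul_Sup_left[OF QQ zc fW] fa by simp
    also have "qle Q \<dots> (qmul Q z (f a))"
      by (rule qSup_least[OF cl]) (use swap(1)[OF _ _ z] W_def fW qmul_closed[OF QQ _ zc] both in auto)
    finally have "qle Q (qmul Q (f a) z) (qmul Q z (f a))" .
    moreover have "qmul Q z (f a) = qSup Q (qmul Q z ` f ` W)"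
      using qmul_Sup_right[OF QQ zc fW] fa by simp
    moreover have "qle Q (qSup Q (qmul Q z ` f ` W)) (qmul Q (f a) z)"
      by (rule qSup_least[OF cl]) (use swap(2)[OF _ _ z] W_def fW qmul_closed[OF QQ zc] both in auto)
    ultimately show ?thesis using qle_antisym[OF cl] both by simp
  qed
  then show ?thesis
    using fa_below locale_hom_projection[OF L f a] unfolding central_projections_def by auto
qed

lemma mem_central_products:
  assumes x: "x \<in> below_unit Q T" and T: "T \<in> central_projections Q T" and TH: "T \<in> H"
    and xEH: "x \<in> central_projections Q T \<or> x \<in> H"
  shows "x \<in> {qmul Q e h | e h. e \<in> central_projections Q T \<and> h \<in> H}"
proof -
  have "x = qmul Q T x" "x = qmul Q x T" using x unfolding below_unit_def by simp_all
  then show ?thesis using xEH T TH by blast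
qed

lemma locale_hom_images_in_commuting_projections:
  assumes Q: "qobj K Q" and locales: "\<forall>i\<in>I. is_locale K (L i)"
    and regular: "\<forall>i\<in>I. i \<noteq> j \<longrightarrow> regular (L i)" and homs: "\<forall>i\<in>I. qhom K (L i) Q (f i)"
  obtains M where "commuting_projections Q (kunit K Q) M" "kunit K Q \<in> M"
    "\<forall>i\<in>I. \<forall>a\<in>qcar (L i). f i a \<in> M"
proof -
  have iq: "involutive_quantale Q" using Q unfolding qobj_def by blast
  have cl: "complete_lattice_on Q" using iq involutive_quantale_quantale quantale_complete_lattice by blast
  define T where "T = kunit K Q"
  have T: "T \<in> central_projections Q T" using kunit_central[OF Q] unfolding T_def .
  define H where "H = insert T (if j \<in> I then f j ` qcar (L j) else {})"
  define M where "M = {qmul Q e h | e h. e \<in> central_projections Q T \<and> h \<in> H}"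
  have TH: "T \<in> H" unfolding H_def by simp
  have "commuting_projections Q T (if j \<in> I then f j ` qcar (L j) else {})"
  proof (cases "j \<in> I")
    case True
    then show ?thesis
      using commuting_projections_locale_hom_image[OF _ cl, of K "L j" "f j"] locales homs
      unfolding T_def by simp
  qed (simp add: commuting_projections_def)
  then have "commuting_projections Q T H" unfolding H_def by (rule commuting_projections_insert_unit[OF T])
  then have "commuting_projections Q T M"
    unfolding M_def by (rule commuting_projections_products[OF iq kunit_closed[OF Q, folded T_def]])
  moreover have "T \<in> M"
    using mem_central_products[OF _ T TH] T unfolding M_def central_projections_def by blast
  moreover have "f i a \<in> M" if i: "i \<in> I" and a: "a \<in> qcar (L i)" for i a
  proof -
    have "f i a \<in> below_unit Q T"
      using locale_hom_below_unit[OF _ cl, of K "L i" "f i" a] locales homs i a unfolding T_def by blast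
    moreover have "f i a \<in> central_projections Q T \<or> f i a \<in> H"
      using regular_locale_hom_central[OF _ _ Q, of "L i" "f i" a] locales regular homs i a
      unfolding T_def H_def by auto
    ultimately show ?thesis using mem_central_products[OF _ T TH] unfolding M_def by blast
  qed
  ultimately show ?thesis using that unfolding T_def by blast
qed

section \<open>Joins of projections\<close>

definition join_closure :: "'a qt \<Rightarrow> 'a set \<Rightarrow> 'a set" where
  "join_closure Q M = qSup Q ` Pow M"

lemma join_closure_subset: "complete_lattice_on Q \<Longrightarrow> M \<subseteq> qcar Q \<Longrightarrow> join_closure Q M \<subseteq> qcar Q"
  unfolding join_closure_def using qSup_closed by blast

lemma subset_join_closure:
  assumes "complete_lattice_on Q" and "M \<subseteq> qcar Q" shows "M \<subseteq> join_closure Q M"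
proof
  fix m assume m: "m \<in> M"
  then have "m = qSup Q {m}" using qSup_singleton[of Q m] assms by auto
  moreover have "{m} \<in> Pow M" using m by simp
  ultimately show "m \<in> join_closure Q M" unfolding join_closure_def by (rule image_eqI)
qed

lemma join_closure_Sup_closed:
  assumes cl: "complete_lattice_on Q" and M: "M \<subseteq> qcar Q" and B: "B \<subseteq> join_closure Q M"
  shows "qSup Q B \<in> join_closure Q M"
proof -
  let ?\<A> = "{A \<in> Pow M. qSup Q A \<in> B}"
  have "B = qSup Q ` ?\<A>" using B unfolding join_closure_def by blast
  also have "qSup Q (qSup Q ` ?\<A>) = qSup Q (\<Union>?\<A>)" using M by (intro qSup_Union[OF cl]) auto
  finally show ?thesis unfolding join_closure_def by blast
qed

lemma join_closure_mul_closed: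
  assumes Q: "quantale Q" and M: "M \<subseteq> qcar Q" and mul: "\<forall>a\<in>M. \<forall>b\<in>M. qmul Q a b \<in> M"
    and x: "x \<in> join_closure Q M" and y: "y \<in> join_closure Q M"
  shows "qmul Q x y \<in> join_closure Q M"
proof -
  obtain A B where A: "A \<subseteq> M" "x = qSup Q A" and B: "B \<subseteq> M" "y = qSup Q B"
    using x y unfolding join_closure_def by blast
  have "qmul Q x y = qSup Q {qmul Q a b | a b. a \<in> A \<and> b \<in> B}"
    using qmul_Sup_Sup[OF Q] A B M by auto
  moreover have "{qmul Q a b | a b. a \<in> A \<and> b \<in> B} \<subseteq> M" using A B mul by blast
  ultimately show ?thesis unfolding join_closure_def by blast
qed

lemma join_closure_of_projections:
  assumes Q: "involutive_quantale Q" and T: "T \<in> qcar Q" and M: "commuting_projections Q T M"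
    and x: "x \<in> join_closure Q M"
  shows "x \<in> below_unit Q T" "qinv Q x = x" "qle Q x (qmul Q x x)"
proof -
  have QQ: "quantale Q" using Q by (rule involutive_quantale_quantale)
  have cl: "complete_lattice_on Q" using QQ by (rule quantale_complete_lattice)
  obtain A where "A \<subseteq> M" and xA: "x = qSup Q A" using x unfolding join_closure_def by blast
  then have Ab: "A \<subseteq> below_unit Q T" and Ap: "\<forall>a\<in>A. projection Q a"
    using M unfolding commuting_projections_def by auto
  have A: "A \<subseteq> qcar Q" using Ab unfolding below_unit_def by auto
  have "(\<lambda>a. qmul Q a T) ` A = A" "qmul Q T ` A = A" "qinv Q ` A = A"
    using Ab Ap unfolding below_unit_def projection_def by (auto simp: image_iff subset_iff)
  moreover have "qle Q x T"
    unfolding xA using Ab T by (intro qSup_least[OF cl A]) (auto simp: below_unit_def)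
  ultimately show "x \<in> below_unit Q T" "qinv Q x = x"
    using qSup_closed[OF cl A] qmul_Sup_left[OF QQ T A] qmul_Sup_right[OF QQ T A] qinv_Sup[OF Q A] xA
    unfolding below_unit_def by simp_all
  have "A \<subseteq> {qmul Q a b | a b. a \<in> A \<and> b \<in> A}"
  proof
    fix a assume a: "a \<in> A"
    then have "a = qmul Q a a" using Ap unfolding projection_def by simp
    then show "a \<in> {qmul Q a b | a b. a \<in> A \<and> b \<in> A}" using a by blast
  qed
  then show "qle Q x (qmul Q x x)"
    unfolding xA qmul_Sup_Sup[OF QQ A A] using qmul_closed[OF QQ] A by (intro qSup_mono[OF cl]) auto
qed

section \<open>Subobjects of a coproduct\<close>

definition subqobj :: "qcat \<Rightarrow> 'a qt \<Rightarrow> 'a set \<Rightarrow> bool" where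
  "subqobj K Q S \<longleftrightarrow> S \<subseteq> qcar Q \<and> (\<forall>B. B \<subseteq> S \<longrightarrow> qSup Q B \<in> S) \<and>
     (\<forall>a\<in>S. \<forall>b\<in>S. qmul Q a b \<in> S) \<and> (\<forall>a\<in>S. qinv Q a \<in> S) \<and> kunit K Q \<in> S"

lemma subqobj_join_closure:
  assumes Q: "qobj K Q" and M: "commuting_projections Q (kunit K Q) M" and T: "kunit K Q \<in> M"
  shows "subqobj K Q (join_closure Q M)"
proof -
  have iq: "involutive_quantale Q" using Q unfolding qobj_def by blast
  have QQ: "quantale Q" using iq by (rule involutive_quantale_quantale)
  have cl: "complete_lattice_on Q" using QQ by (rule quantale_complete_lattice)
  have Mc: "M \<subseteq> qcar Q" using M unfolding commuting_projections_def below_unit_def by auto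
  have "\<forall>a\<in>M. \<forall>b\<in>M. qmul Q a b \<in> M" using M unfolding commuting_projections_def by blast
  then show ?thesis
    unfolding subqobj_def
    using join_closure_subset[OF cl Mc] join_closure_Sup_closed[OF cl Mc] join_closure_mul_closed[OF QQ Mc]
      join_closure_of_projections(2)[OF iq kunit_closed[OF Q] M] subset_join_closure[OF cl Mc] T
    by auto
qed

lemma is_lub_restrict:
  assumes cl: "complete_lattice_on Q" and S: "subqobj K Q S" and B: "B \<subseteq> S"
  shows "is_lub (Q\<lparr>qcar := S\<rparr>) B (qSup Q B)"
proof -
  have "S \<subseteq> qcar Q" and "qSup Q B \<in> S" using S B unfolding subqobj_def by auto
  then show ?thesis
    using is_lub_qSup[OF cl, of B] B unfolding is_lub_def by auto
qed

lemma complete_lattice_on_restrict: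
  assumes cl: "complete_lattice_on Q" and S: "subqobj K Q S"
  shows "complete_lattice_on (Q\<lparr>qcar := S\<rparr>)"
proof -
  have Sc: "S \<subseteq> qcar Q" using S unfolding subqobj_def by blast
  show ?thesis
    unfolding complete_lattice_on_def
  proof (intro conjI ballI allI impI)
    fix a b c
    assume "a \<in> qcar (Q\<lparr>qcar := S\<rparr>)" "b \<in> qcar (Q\<lparr>qcar := S\<rparr>)" "c \<in> qcar (Q\<lparr>qcar := S\<rparr>)"
    then have abc: "a \<in> qcar Q" "b \<in> qcar Q" "c \<in> qcar Q" using Sc by auto
    show "qle (Q\<lparr>qcar := S\<rparr>) a a" using qle_refl[OF cl abc(1)] by simp
    show "a = b" if "qle (Q\<lparr>qcar := S\<rparr>) a b \<and> qle (Q\<lparr>qcar := S\<rparr>) b a"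
      using qle_antisym[OF cl abc(1,2)] that by simp
    show "qle (Q\<lparr>qcar := S\<rparr>) a c"
      if "qle (Q\<lparr>qcar := S\<rparr>) a b \<and> qle (Q\<lparr>qcar := S\<rparr>) b c"
      using qle_trans[OF cl abc] that by simp
  next
    fix B assume "B \<subseteq> qcar (Q\<lparr>qcar := S\<rparr>)"
    then show "\<exists>s. is_lub (Q\<lparr>qcar := S\<rparr>) B s" using is_lub_restrict[OF cl S] by auto
  qed
qed

lemma qSup_restrict:
  assumes cl: "complete_lattice_on Q" and S: "subqobj K Q S" and B: "B \<subseteq> S"
  shows "qSup (Q\<lparr>qcar := S\<rparr>) B = qSup Q B"
  using qSup_eqI[OF complete_lattice_on_restrict[OF cl S] is_lub_restrict[OF cl S B]] .

lemma qtop_restrict: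
  assumes cl: "complete_lattice_on Q" and S: "subqobj K Q S" and top: "qtop Q \<in> S"
  shows "qtop (Q\<lparr>qcar := S\<rparr>) = qtop Q"
proof -
  have Sc: "S \<subseteq> qcar Q" using S unfolding subqobj_def by blast
  have "qtop (Q\<lparr>qcar := S\<rparr>) = qSup Q S" unfolding qtop_def using qSup_restrict[OF cl S] by simp
  moreover have "qSup Q S = qtop Q"
    using qSup_mono[OF cl Sc] qSup_upper[OF cl Sc top] qle_antisym[OF cl] qSup_closed[OF cl Sc] qtop_closed[OF cl]
    unfolding qtop_def by blast
  ultimately show ?thesis by simp
qed

lemma quantale_restrict:
  assumes QQ: "quantale Q" and S: "subqobj K Q S"
  shows "quantale (Q\<lparr>qcar := S\<rparr>)"
  unfolding quantale_def
proof (intro conjI ballI allI impI)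
  let ?R = "Q\<lparr>qcar := S\<rparr>"
  have cl: "complete_lattice_on Q" using QQ by (rule quantale_complete_lattice)
  have Sc: "S \<subseteq> qcar Q" and mul: "\<And>a b. a \<in> S \<Longrightarrow> b \<in> S \<Longrightarrow> qmul Q a b \<in> S"
    using S unfolding subqobj_def by auto
  note Sup_eq = qSup_restrict[OF cl S]
  show "complete_lattice_on ?R" using complete_lattice_on_restrict[OF cl S] .
  fix a b c A assume "a \<in> qcar ?R" "b \<in> qcar ?R" "c \<in> qcar ?R"
  then have a: "a \<in> S" and b: "b \<in> S" and c: "c \<in> S" by simp_all
  show "qmul ?R a b \<in> qcar ?R" using mul[OF a b] by simp
  show "qmul ?R (qmul ?R a b) c = qmul ?R a (qmul ?R b c)" using qmul_assoc[OF QQ] a b c Sc by auto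
  assume "A \<subseteq> qcar ?R"
  then have A: "A \<subseteq> S" by simp
  have imgs: "qmul Q a ` A \<subseteq> S" "(\<lambda>b. qmul Q b a) ` A \<subseteq> S" using mul a A by auto
  have ac: "a \<in> qcar Q" and Ac: "A \<subseteq> qcar Q" using a A Sc by auto
  show "qmul ?R a (qSup ?R A) = qSup ?R (qmul ?R a ` A)"
    using Sup_eq[OF A] Sup_eq[OF imgs(1)] qmul_Sup_right[OF QQ ac Ac] by simp
  show "qmul ?R (qSup ?R A) a = qSup ?R ((\<lambda>b. qmul ?R b a) ` A)"
    using Sup_eq[OF A] Sup_eq[OF imgs(2)] qmul_Sup_left[OF QQ ac Ac] by simp
qed

lemma involutive_quantale_restrict:
  assumes iq: "involutive_quantale Q" and S: "subqobj K Q S"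
  shows "involutive_quantale (Q\<lparr>qcar := S\<rparr>)"
  unfolding involutive_quantale_def
proof (intro conjI ballI allI impI)
  let ?R = "Q\<lparr>qcar := S\<rparr>"
  have QQ: "quantale Q" using iq by (rule involutive_quantale_quantale)
  have cl: "complete_lattice_on Q" using QQ by (rule quantale_complete_lattice)
  have Sc: "S \<subseteq> qcar Q" and inv: "\<And>a. a \<in> S \<Longrightarrow> qinv Q a \<in> S"
    using S unfolding subqobj_def by auto
  show "quantale ?R" using quantale_restrict[OF QQ S] .
  fix a b assume "a \<in> qcar ?R" "b \<in> qcar ?R"
  then have a: "a \<in> S" and b: "b \<in> S" by simp_all
  show "qinv ?R a \<in> qcar ?R" using inv[OF a] by simp
  show "qinv ?R (qinv ?R a) = a" using qinv_qinv[OF iq] a Sc by auto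
  show "qinv ?R (qmul ?R a b) = qmul ?R (qinv ?R b) (qinv ?R a)" using qinv_qmul[OF iq] a b Sc by auto
next
  fix A assume "A \<subseteq> qcar (Q\<lparr>qcar := S\<rparr>)"
  then have A: "A \<subseteq> S" by simp
  have cl: "complete_lattice_on Q" using iq involutive_quantale_quantale quantale_complete_lattice by blast
  have "qinv Q ` A \<subseteq> S" "A \<subseteq> qcar Q" using A S unfolding subqobj_def by auto
  then show "qinv (Q\<lparr>qcar := S\<rparr>) (qSup (Q\<lparr>qcar := S\<rparr>) A) =
      qSup (Q\<lparr>qcar := S\<rparr>) (qinv (Q\<lparr>qcar := S\<rparr>) ` A)"
    using qSup_restrict[OF cl S A] qSup_restrict[OF cl S, of "qinv Q ` A"] qinv_Sup[OF iq] by simp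
qed

lemma qobj_restrict:
  assumes Q: "qobj K Q" and S: "subqobj K Q S"
  shows "qobj K (Q\<lparr>qcar := S\<rparr>)"
proof -
  have iq: "involutive_quantale Q" using Q unfolding qobj_def by blast
  have cl: "complete_lattice_on Q" using iq involutive_quantale_quantale quantale_complete_lattice by blast
  have Sc: "S \<subseteq> qcar Q" and T: "kunit K Q \<in> S" using S unfolding subqobj_def by auto
  have "case K of UnitalInv \<Rightarrow> unital (Q\<lparr>qcar := S\<rparr>) | StrongInv \<Rightarrow> strong (Q\<lparr>qcar := S\<rparr>)"
  proof (cases K)
    case UnitalInv
    then have "unital Q" using Q unfolding qobj_def by simp
    then show ?thesis using UnitalInv T Sc unfolding unital_def kunit_def by auto
  next
    case StrongInv
    then have "strong Q" using Q unfolding qobj_def by simp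
    then show ?thesis using StrongInv T qtop_restrict[OF cl S] unfolding strong_def kunit_def by simp
  qed
  then show ?thesis using involutive_quantale_restrict[OF iq S] unfolding qobj_def by blast
qed

lemma qhom_restrict_iff:
  assumes Q: "qobj K Q" and S: "subqobj K Q S"
  shows "qhom K P (Q\<lparr>qcar := S\<rparr>) f \<longleftrightarrow> qhom K P Q f \<and> (\<forall>a\<in>qcar P. f a \<in> S)"
proof -
  have cl: "complete_lattice_on Q"
    using Q unfolding qobj_def involutive_quantale_def quantale_def by blast
  have Sc: "S \<subseteq> qcar Q" and T: "kunit K Q \<in> S" using S unfolding subqobj_def by auto
  have "qSup (Q\<lparr>qcar := S\<rparr>) (f ` A) = qSup Q (f ` A)" if "\<forall>a\<in>qcar P. f a \<in> S" "A \<subseteq> qcar P" for A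
    using qSup_restrict[OF cl S, of "f ` A"] that by blast
  then have Sup: "(\<forall>A. A \<subseteq> qcar P \<longrightarrow> f (qSup P A) = qSup (Q\<lparr>qcar := S\<rparr>) (f ` A)) \<longleftrightarrow>
    (\<forall>A. A \<subseteq> qcar P \<longrightarrow> f (qSup P A) = qSup Q (f ` A))" if "\<forall>a\<in>qcar P. f a \<in> S"
    using that by simp
  show ?thesis
  proof (cases K)
    case UnitalInv
    then show ?thesis using Sup Sc unfolding qhom_def by auto
  next
    case StrongInv
    then have "qtop (Q\<lparr>qcar := S\<rparr>) = qtop Q" using qtop_restrict[OF cl S] T unfolding kunit_def by simp
    then show ?thesis using StrongInv Sup Sc unfolding qhom_def by auto
  qed
qed

lemma coproduct_generated_by_injections:
  fixes C :: "'c qt"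
  assumes C: "is_coproduct_wrt K I L C iota TYPE('c)"
    and S: "subqobj K C S" and gen: "\<forall>i\<in>I. \<forall>a\<in>qcar (L i). iota i a \<in> S"
  shows "S = qcar C"
proof -
  let ?R = "C\<lparr>qcar := S\<rparr>"
  have objC: "qobj K C" and homs: "\<forall>i\<in>I. qhom K (L i) C (iota i)"
    and up: "\<And>(Q::'c qt) f. qobj K Q \<Longrightarrow> \<forall>i\<in>I. qhom K (L i) Q (f i) \<Longrightarrow>
      \<exists>h. qhom K C Q h \<and> (\<forall>i\<in>I. \<forall>x\<in>qcar (L i). h (iota i x) = f i x) \<and>
        (\<forall>h'. qhom K C Q h' \<and> (\<forall>i\<in>I. \<forall>x\<in>qcar (L i). h' (iota i x) = f i x) \<longrightarrow>
          (\<forall>y\<in>qcar C. h' y = h y))"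
    using C unfolding is_coproduct_wrt_def by blast+
  have "\<forall>i\<in>I. qhom K (L i) ?R (iota i)" using homs gen qhom_restrict_iff[OF objC S] by blast
  then obtain h where "qhom K C ?R h" and h_iota: "\<forall>i\<in>I. \<forall>x\<in>qcar (L i). h (iota i x) = iota i x"
    using up[OF qobj_restrict[OF objC S]] by blast
  then have h: "qhom K C C h" and hS: "\<forall>y\<in>qcar C. h y \<in> S"
    using qhom_restrict_iff[OF objC S, of C h] by blast+
  obtain h0 where unique: "\<And>h'. qhom K C C h' \<Longrightarrow> \<forall>i\<in>I. \<forall>x\<in>qcar (L i). h' (iota i x) = iota i x \<Longrightarrow>
      \<forall>y\<in>qcar C. h' y = h0 y"
    using up[OF objC homs] by blast
  have "qhom K C C (\<lambda>y. y)" unfolding qhom_def by (cases K) auto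
  then have "y = h y" if "y \<in> qcar C" for y
    using unique[of "\<lambda>y. y"] unique[OF h h_iota] that by simp
  then have "qcar C \<subseteq> S" using hS by auto
  then show ?thesis using S unfolding subqobj_def by blast
qed

theorem lemma4p3:
  fixes K :: qcat
    and I :: "'i set"
    and L :: "'i \<Rightarrow> 'a qt"
    and C :: "'c qt"
    and iota :: "'i \<Rightarrow> 'a \<Rightarrow> 'c"
  assumes locales: "\<forall>i\<in>I. is_locale K (L i)"
    and almost_all_regular: "\<exists>j. \<forall>i\<in>I. i \<noteq> j \<longrightarrow> regular (L i)"
    and coprod_self: "is_coproduct_wrt K I L C iota TYPE('c)"
    and coprod_big: "is_coproduct_wrt K I L C iota TYPE(('i \<times> 'a \<times> bool) list set)"
  shows "is_locale K C"
proof -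
  have objC: "qobj K C" and homs: "\<forall>i\<in>I. qhom K (L i) C (iota i)"
    using coprod_self unfolding is_coproduct_wrt_def by blast+
  have iq: "involutive_quantale C" using objC unfolding qobj_def by blast
  have cl: "complete_lattice_on C" using iq involutive_quantale_quantale quantale_complete_lattice by blast
  obtain j where "\<forall>i\<in>I. i \<noteq> j \<longrightarrow> regular (L i)" using almost_all_regular by blast
  then obtain M where M: "commuting_projections C (kunit K C) M" and T: "kunit K C \<in> M"
    and gen: "\<forall>i\<in>I. \<forall>a\<in>qcar (L i). iota i a \<in> M"
    using locale_hom_images_in_commuting_projections[OF objC locales _ homs] by blast
  have "M \<subseteq> qcar C" using M unfolding commuting_projections_def below_unit_def by auto
  then have "join_closure C M = qcar C"
    using coproduct_generated_by_injections[OF coprod_self subqobj_join_closure[OF objC M T]]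
      gen subset_join_closure[OF cl] by blast
  then have "\<And>x. x \<in> qcar C \<Longrightarrow> x \<in> join_closure C M" by simp
  with join_closure_of_projections[OF iq kunit_closed[OF objC] M] show ?thesis
    by (intro is_locale_of_square_increasing[OF objC] subsetI) blast+
qed

end
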